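(* Let $\mathcal G$ be a strongly connected directed graph with no self loops, vertex set $\mathcal V=\{1,\dots,n\}$ and edge set $\mathcal E=\{1,\dots,m\}$. Let $B=S-D$ be its incidence matrix, let $Q=DB^\mathsf{T}$, and let $W$ and $Q^\ddagger$ be as in the context. Let $\omega^{\mathrm u}\in\mathbb{R}^n$ be constant. Consider the dynamics \[ \dot{\tilde\theta}(t)=\omega^{\mathrm u}+c(t),\qquad \tilde\beta(t)=B^\mathsf{T}\tilde\theta(t),\qquad y(t)=D\tilde\beta(t). \] Let $\mathcal T$ be an outward directed spanning tree with root $r$, and let $g_1,\dots,g_{n-1}$ be an ordering of its edges such that $g_a\prec g_b$ implies $a<b$. Let $k,k_2>0$. Let $0<t_1<\dots<t_n$ satisfy $t_{j+1}-t_j>|\tilde\beta_{g_j}(t_j)|/k_2$ for each $j$. For each $i\neq r$, let $j(i)$ be the unique index with $\mathrm{dst}(g_{j(i)})=i$. Let the control be \[ c_i(t)=\begin{cases} k\,y_i(t) & t<t_1,\\ k\,y_i(t_1)+k_2\,\mathrm{sign}\big(\tilde\beta_{g_{j(i)}}(t)\big) & i\neq r,\ t_{j(i)}\le t<t_{j(i)+1},\\ k\,y_i(t_1) & \text{otherwise.}\end{cases} \] Assume \[ \tilde\beta(t_1)=-k^{-1}B^\mathsf{T}Q^\ddagger\omega^{\mathrm u} \qquad\text{and}\qquad \omega^{\mathrm u}+k\,y(t_1)=W\omega^{\mathrm u}. \] Then for all $j=1,\dots,n-1$, \[ \tilde\beta(t_{j+1})=(I+B^\mathsf{T}DE^{g_j})\,\tilde\beta(t_j)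 \qquad\text{and}\qquad \tilde\beta_{g_j}(t_{j+1})=0. \]
   Context: The matrices $S,D\in\mathbb{R}^{n\times m}$ are defined by $S_{ie}=1$ if node $i$ is the source of edge $e$ and $0$ otherwise, and $D_{ie}=1$ if node $i$ is the destination of edge $e$ and $0$ otherwise. The vector $\mathbf{1}$ is the all-ones vector. The matrix $Q=DB^\mathsf{T}$ is an irreducible rate matrix. Let $z>0$ satisfy $z^\mathsf{T}Q=0$ and $\mathbf{1}^\mathsf{T}z=1$, and set $W=\mathbf{1}z^\mathsf{T}$. Write $Q=T\begin{bmatrix}0&0\\0&\Lambda\end{bmatrix}T^{-1}$, where $T$ is invertible with first column $\mathbf{1}$, the first row of $T^{-1}$ is $z^\mathsf{T}$, and $\Lambda$ is invertible. Define $Q^\ddagger=T\begin{bmatrix}0&0\\0&\Lambda^{-1}\end{bmatrix}T^{-1}$. An outward directed spanning tree with root $r$ is a set $\mathcal T$ of $n-1$ edges such that every vertex is reachable from $r$ by a directed path in $\mathcal T$, and each vertex other than $r$ is the destination of exactly one edge of $\mathcal T$. For $f,g\in\mathcal T$, $f\prec g$ means there is a directed walk of nonzero length in $\mathcal T$ from $\mathrm{dst}(f)$ to $\mathrm{dst}(g)$. $E^g\in\mathbb{R}^{m\times m}$ is zero except $E^g_{gg}=1$. The convention $\mathrm{sign}(0)=0$ is used. *)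

theory Defs
  imports "HOL-Analysis.Analysis" "Jordan_Normal_Form.Matrix"
begin

text \<open>Graph with nodes 0..n-1 and edges 0..m-1, given by source and destination maps.\<close>

definition incS :: "nat \<Rightarrow> nat \<Rightarrow> (nat \<Rightarrow> nat) \<Rightarrow> real mat" where
  "incS n m src = mat n m (\<lambda>(i,e). if src e = i then 1 else 0)"

definition incD :: "nat \<Rightarrow> nat \<Rightarrow> (nat \<Rightarrow> nat) \<Rightarrow> real mat" where
  "incD n m dst = mat n m (\<lambda>(i,e). if dst e = i then 1 else 0)"

definition incB :: "nat \<Rightarrow> nat \<Rightarrow> (nat \<Rightarrow> nat) \<Rightarrow> (nat \<Rightarrow> nat) \<Rightarrow> real mat" where
  "incB n m src dst = incS n m src - incD n m dst"

definition rateQ :: "nat \<Rightarrow> nat \<Rightarrow> (nat \<Rightarrow> nat) \<Rightarrow> (nat \<Rightarrow> nat) \<Rightarrow> real mat" where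
  "rateQ n m src dst = incD n m dst * transpose_mat (incB n m src dst)"

definition Emat :: "nat \<Rightarrow> nat \<Rightarrow> real mat" where
  "Emat m g = mat m m (\<lambda>(a,b). if a = g \<and> b = g then 1 else 0)"

definition edge_rel :: "nat \<Rightarrow> (nat \<Rightarrow> nat) \<Rightarrow> (nat \<Rightarrow> nat) \<Rightarrow> nat set \<Rightarrow> (nat \<times> nat) set" where
  "edge_rel m src dst F = {(src e, dst e) | e. e \<in> F \<and> e < m}"

definition strongly_connected :: "nat \<Rightarrow> nat \<Rightarrow> (nat \<Rightarrow> nat) \<Rightarrow> (nat \<Rightarrow> nat) \<Rightarrow> bool" where
  "strongly_connected n m src dst \<longleftrightarrow>
     (\<forall>u<n. \<forall>v<n. (u, v) \<in> (edge_rel m src dst {0..<m})\<^sup>*)"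

definition outward_spanning_tree ::
  "nat \<Rightarrow> nat \<Rightarrow> (nat \<Rightarrow> nat) \<Rightarrow> (nat \<Rightarrow> nat) \<Rightarrow> nat \<Rightarrow> nat set \<Rightarrow> bool" where
  "outward_spanning_tree n m src dst r Tr \<longleftrightarrow>
     r < n \<and> Tr \<subseteq> {0..<m} \<and> card Tr = n - 1 \<and>
     (\<forall>v<n. (r, v) \<in> (edge_rel m src dst Tr)\<^sup>*) \<and>
     (\<forall>v<n. v \<noteq> r \<longrightarrow> (\<exists>!e. e \<in> Tr \<and> dst e = v))"

definition tree_prec :: "nat \<Rightarrow> (nat \<Rightarrow> nat) \<Rightarrow> (nat \<Rightarrow> nat) \<Rightarrow> nat set \<Rightarrow> nat \<Rightarrow> nat \<Rightarrow> bool" where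
  "tree_prec m src dst Tr f g \<longleftrightarrow> (dst f, dst g) \<in> (edge_rel m src dst Tr)\<^sup>+"

text \<open>Q^\<ddagger> as in the context: Q = T diag(0,\<Lambda>) T^{-1}, Qd = T diag(0,\<Lambda>^{-1}) T^{-1}.\<close>
definition is_Qdagger :: "nat \<Rightarrow> real mat \<Rightarrow> real vec \<Rightarrow> real mat \<Rightarrow> bool" where
  "is_Qdagger n Q z Qd \<longleftrightarrow>
    (\<exists>T Ti L Li. T \<in> carrier_mat n n \<and> Ti \<in> carrier_mat n n \<and>
       T * Ti = 1\<^sub>m n \<and> Ti * T = 1\<^sub>m n \<and>
       col T 0 = vec n (\<lambda>_. 1) \<and> row Ti 0 = z \<and>
       L \<in> carrier_mat (n-1) (n-1) \<and> Li \<in> carrier_mat (n-1) (n-1) \<and>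
       L * Li = 1\<^sub>m (n-1) \<and> Li * L = 1\<^sub>m (n-1) \<and>
       Q = T * four_block_mat (0\<^sub>m 1 1) (0\<^sub>m 1 (n-1)) (0\<^sub>m (n-1) 1) L * Ti \<and>
       Qd = T * four_block_mat (0\<^sub>m 1 1) (0\<^sub>m 1 (n-1)) (0\<^sub>m (n-1) 1) Li * Ti)"

definition Wmat :: "nat \<Rightarrow> real vec \<Rightarrow> real mat" where
  "Wmat n z = mat n n (\<lambda>(i,j). z $ j)"

definition jidx :: "nat \<Rightarrow> (nat \<Rightarrow> nat) \<Rightarrow> (nat \<Rightarrow> nat) \<Rightarrow> nat \<Rightarrow> nat" where
  "jidx n dst g i = (THE j. j \<in> {1..<n} \<and> dst (g j) = i)"

end

theory Submission
  imports Defs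
begin

(* After t_1 the second initial condition makes every node drift at the common rate z^T omega,
   so edge differences change only through the sign term, which on [t_j, t_(j+1)) acts on the
   single node dst(g_j): the intervals are disjoint, and j(dst g_j) = j because distinct tree
   edges enter distinct non-root vertices. The difference b across g_j therefore obeys
   b' = -k2 sgn b, and the gap condition lets it reach 0 before t_(j+1). Hence dst(g_j) ends up
   shifted, relative to the common drift, by exactly b(t_j), and such a shift acts on edge
   differences as I + B^T D E^(g_j). *)

lemma has_integral_const_interval:
  fixes a b c :: real
  assumes "a \<le> b"
  shows "((\<lambda>_. c) has_integral c * (b - a)) {a..b}"
  using has_integral_const_real[of c a b] assms by (simp add: mult.commute)

(* Integral form of b' = -k2 sgn b on [T0, T]. *)
locale sign_feedback =
  fixes k2 T0 T :: real and b :: "real \<Rightarrow> real"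
  assumes k2_pos: "k2 > 0"
    and integral: "\<And>s s'. T0 \<le> s \<Longrightarrow> s \<le> s' \<Longrightarrow> s' \<le> T \<Longrightarrow>
      ((\<lambda>\<tau>. k2 * sgn (b \<tau>)) has_integral b s - b s') {s..s'}"
begin

lemma increment_bound:
  assumes "T0 \<le> s" "s \<le> s'" "s' \<le> T"
  shows "\<bar>b s - b s'\<bar> \<le> k2 * (s' - s)"
proof -
  have "b s - b s' \<le> k2 * (s' - s)"
    by (rule has_integral_le[OF integral[OF assms] has_integral_const_interval[OF assms(2)]])
      (use k2_pos in \<open>auto simp: sgn_real_def\<close>)
  moreover have "- k2 * (s' - s) \<le> b s - b s'"
    by (rule has_integral_le[OF has_integral_const_interval[OF assms(2)] integral[OF assms]])
      (use k2_pos in \<open>auto simp: sgn_real_def\<close>)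
  ultimately show ?thesis by linarith
qed

lemma continuous: "continuous_on {T0..T} b"
proof (rule lipschitz_on_continuous_on)
  show "k2-lipschitz_on {T0..T} b"
  proof (rule lipschitz_onI)
    fix x y assume "x \<in> {T0..T}" "y \<in> {T0..T}"
    then show "dist (b x) (b y) \<le> k2 * dist x y"
      using increment_bound[of x y] increment_bound[of y x]
      by (cases "x \<le> y") (auto simp: dist_real_def abs_minus_commute)
  qed (use k2_pos in auto)
qed

lemma decrease_while_positive:
  assumes "T0 \<le> \<sigma>" "\<sigma> \<le> T" and pos: "\<And>x. \<sigma> < x \<Longrightarrow> x \<le> T \<Longrightarrow> b x > 0"
  shows "b \<sigma> - b T = k2 * (T - \<sigma>)"
proof -
  have "((\<lambda>\<tau>. k2 * sgn (b \<tau>)) has_integral k2 * (T - \<sigma>)) {\<sigma>..T}"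
  proof (rule has_integral_spike_finite[of "{\<sigma>}"])
    show "((\<lambda>_. k2) has_integral k2 * (T - \<sigma>)) {\<sigma>..T}"
      using has_integral_const_interval assms(2) .
  qed (use pos in auto)
  then show ?thesis using has_integral_unique integral[OF assms(1,2) order_refl] by blast
qed

lemma not_positive_after_gap:
  assumes "T0 < T" "\<bar>b T0\<bar> < k2 * (T - T0)"
  shows "\<not> b T > 0"
proof
  assume bT: "b T > 0"
  define S where "S = {T0..T} \<inter> b -` {..0}"
  \<comment> \<open>\<open>Sup S\<close> is the last time before \<open>T\<close> with \<open>b \<le> 0\<close>;
    after it \<open>b\<close> decreases at full rate \<open>k2\<close>.\<close>
  show False
  proof (cases "S = {}")
    case True
    then have "b T0 - b T = k2 * (T - T0)"
      using assms(1) by (intro decrease_while_positive) (force simp: S_def set_eq_iff)+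
    with assms(2) bT show False by linarith
  next
    case False
    have "closed S"
      unfolding S_def by (rule continuous_closed_preimage[OF continuous]) auto
    moreover have bdd: "bdd_above S"
      unfolding S_def by (auto intro: bdd_aboveI[of _ T])
    ultimately have "Sup S \<in> S" using False closed_contains_Sup by blast
    then have \<sigma>: "T0 \<le> Sup S" "Sup S \<le> T" "b (Sup S) \<le> 0" by (auto simp: S_def)
    have "b x > 0" if "Sup S < x" "x \<le> T" for x
      using cSup_upper[OF _ bdd, of x] \<sigma>(1) that by (force simp: S_def)
    then have "b (Sup S) - b T = k2 * (T - Sup S)"
      using \<sigma> by (intro decrease_while_positive)
    moreover have "k2 * (T - Sup S) \<ge> 0" using k2_pos \<sigma>(2) by simp
    ultimately show False using \<sigma>(3) bT by linarith
  qed
qed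

lemma negation: "sign_feedback k2 T0 T (\<lambda>\<tau>. - b \<tau>)"
proof
  fix s s' assume "T0 \<le> s" "s \<le> s'" "s' \<le> T"
  from has_integral_neg[OF integral[OF this]]
  show "((\<lambda>\<tau>. k2 * sgn (- b \<tau>)) has_integral - b s - - b s') {s..s'}" by simp
qed (rule k2_pos)

lemma reaches_zero:
  assumes "T0 < T" "\<bar>b T0\<bar> < k2 * (T - T0)"
  shows "b T = 0"
  using not_positive_after_gap[OF assms] sign_feedback.not_positive_after_gap[OF negation] assms
  by fastforce

end

lemma incB_carrier: "incB n m src dst \<in> carrier_mat n m"
  unfolding incB_def incS_def incD_def by auto

lemma incD_carrier: "incD n m dst \<in> carrier_mat n m"
  unfolding incD_def by auto

lemma Emat_carrier: "Emat m g \<in> carrier_mat m m"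
  unfolding Emat_def by auto

lemma Wmat_consensus:
  fixes \<omega> v z :: "real vec"
  assumes \<omega>: "\<omega> \<in> carrier_vec n" and v: "v \<in> carrier_vec n"
    and W: "\<omega> + k \<cdot>\<^sub>v v = Wmat n z *\<^sub>v \<omega>" and p: "p < n"
  shows "\<omega> $ p + k * (v $ p) = (\<Sum>l<n. z $ l * \<omega> $ l)"
proof -
  have "\<omega> $ p + k * (v $ p) = (\<omega> + k \<cdot>\<^sub>v v) $ p" using v p by simp
  also have "\<dots> = (\<Sum>l<n. z $ l * \<omega> $ l)"
    using W \<omega> p by (simp add: Wmat_def scalar_prod_def lessThan_atLeast0)
  finally show ?thesis .
qed

lemma transpose_incB_mult_vec_nth:
  assumes x: "x \<in> carrier_vec n" and e: "e < m" and "src e < n" "dst e < n"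
  shows "(transpose_mat (incB n m src dst) *\<^sub>v x) $ e = x $ src e - x $ dst e"
proof -
  have "(transpose_mat (incB n m src dst) *\<^sub>v x) $ e
      = (\<Sum>p<n. (if src e = p then x $ p else 0) - (if dst e = p then x $ p else 0))"
    using x e by (auto simp: scalar_prod_def incB_def incS_def incD_def lessThan_atLeast0
      intro!: sum.cong)
  also have "\<dots> = x $ src e - x $ dst e"
    using assms by (simp add: sum_subtractf)
  finally show ?thesis .
qed

lemma Emat_mult_vec:
  assumes "v \<in> carrier_vec m" "g < m"
  shows "Emat m g *\<^sub>v v = vec m (\<lambda>a. if a = g then v $ g else 0)"
proof (rule eq_vecI)
  fix a assume "a < dim_vec (vec m (\<lambda>a. if a = g then v $ g else 0))"
  with assms show "(Emat m g *\<^sub>v v) $ a = vec m (\<lambda>a. if a = g then v $ g else 0) $ a"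
    by (cases "a = g") (auto simp: Emat_def scalar_prod_def mult_if_delta)
qed (simp add: Emat_def)

lemma incD_mult_vec_single:
  assumes "g < m"
  shows "incD n m dst *\<^sub>v vec m (\<lambda>a. if a = g then x else 0) = vec n (\<lambda>p. if p = dst g then x else 0)"
proof (rule eq_vecI)
  fix p assume "p < dim_vec (vec n (\<lambda>p. if p = dst g then x else 0))"
  then have p: "p < n" by simp
  have "(incD n m dst *\<^sub>v vec m (\<lambda>a. if a = g then x else 0)) $ p
      = (\<Sum>i\<in>{0..<m}. (if dst i = p then 1 else 0) * (if i = g then x else 0))"
    using p by (simp add: incD_def scalar_prod_def)
  also have "\<dots> = (\<Sum>i\<in>{0..<m}. if i = g then (if p = dst g then x else 0) else 0)"
    by (rule sum.cong) auto
  finally show "(incD n m dst *\<^sub>v vec m (\<lambda>a. if a = g then x else 0)) $ p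
      = vec n (\<lambda>p. if p = dst g then x else 0) $ p"
    using assms p by simp
qed (simp add: incD_def)

lemma step_mat_mult_vec:
  assumes v: "v \<in> carrier_vec m" and g: "g < m"
  shows "(1\<^sub>m m + transpose_mat (incB n m src dst) * incD n m dst * Emat m g) *\<^sub>v v
    = v + transpose_mat (incB n m src dst) *\<^sub>v vec n (\<lambda>p. if p = dst g then v $ g else 0)"
proof -
  have Bt: "transpose_mat (incB n m src dst) \<in> carrier_mat m n" using incB_carrier by auto
  have D: "incD n m dst \<in> carrier_mat n m" and E: "Emat m g \<in> carrier_mat m m"
    by (rule incD_carrier Emat_carrier)+
  have "(1\<^sub>m m + transpose_mat (incB n m src dst) * incD n m dst * Emat m g) *\<^sub>v v
      = v + (transpose_mat (incB n m src dst) * incD n m dst * Emat m g) *\<^sub>v v"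
    using Bt D E v by (subst add_mult_distrib_mat_vec) auto
  also have "(transpose_mat (incB n m src dst) * incD n m dst * Emat m g) *\<^sub>v v
      = transpose_mat (incB n m src dst) *\<^sub>v (incD n m dst *\<^sub>v (Emat m g *\<^sub>v v))"
    using Bt D E v by (simp add: assoc_mult_mat_vec[of _ m n _ m])
  finally show ?thesis by (simp add: Emat_mult_vec[OF v g] incD_mult_vec_single[OF g])
qed

lemma transpose_incB_node_shift:
  assumes edges: "\<forall>e<m. src e < n \<and> dst e < n" and g: "g < m"
    and x: "x \<in> carrier_vec n" and x': "x' \<in> carrier_vec n"
    and shift: "\<And>p. p < n \<Longrightarrow>
      x' $ p = x $ p + w + (if p = dst g then (transpose_mat (incB n m src dst) *\<^sub>v x) $ g else 0)"
  shows "transpose_mat (incB n m src dst) *\<^sub>v x'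
    = (1\<^sub>m m + transpose_mat (incB n m src dst) * incD n m dst * Emat m g)
      *\<^sub>v (transpose_mat (incB n m src dst) *\<^sub>v x)"
    (is "?B *\<^sub>v x' = _ *\<^sub>v ?v")
proof (rule eq_vecI)
  fix e assume "e < dim_vec ((1\<^sub>m m + ?B * incD n m dst * Emat m g) *\<^sub>v ?v)"
  then have e: "e < m" using incB_carrier[of n m src dst] by auto
  have ends: "src e < n" "dst e < n" "dst g < n" using edges e g by auto
  have v: "?v \<in> carrier_vec m"
    using incB_carrier[of n m src dst] x by (metis mult_mat_vec_carrier transpose_carrier_mat)
  define u where "u = vec n (\<lambda>p. if p = dst g then ?v $ g else 0)"
  have "((1\<^sub>m m + ?B * incD n m dst * Emat m g) *\<^sub>v ?v) $ e = ?v $ e + (?B *\<^sub>v u) $ e"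
    using e v incB_carrier[of n m src dst] by (simp add: step_mat_mult_vec[OF v g] u_def)
  also have "\<dots> = (?B *\<^sub>v x') $ e"
    using ends by (simp add: transpose_incB_mult_vec_nth[OF _ e] x x' u_def shift)
  finally show "(?B *\<^sub>v x') $ e = ((1\<^sub>m m + ?B * incD n m dst * Emat m g) *\<^sub>v ?v) $ e"
    by (rule sym)
qed (use incB_carrier[of n m src dst] in auto)

lemma sign_controlled_edge_step:
  fixes \<theta> \<beta> :: "real \<Rightarrow> real vec"
  assumes edges: "\<forall>e<m. src e < n \<and> dst e < n \<and> src e \<noteq> dst e"
    and \<theta>_dim: "\<forall>\<tau>. \<theta> \<tau> \<in> carrier_vec n"
    and \<beta>_def: "\<forall>\<tau>. \<beta> \<tau> = transpose_mat (incB n m src dst) *\<^sub>v \<theta> \<tau>"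
    and g: "g < m" and k2: "k2 > 0" and T: "T0 < T"
    and gap: "\<bar>\<beta> T0 $ g\<bar> < k2 * (T - T0)"
    and flow: "\<And>p s s'. p < n \<Longrightarrow> T0 \<le> s \<Longrightarrow> s \<le> s' \<Longrightarrow> s' \<le> T \<Longrightarrow>
      ((\<lambda>\<tau>. w + (if p = dst g then k2 * sgn (\<beta> \<tau> $ g) else 0)) has_integral \<theta> s' $ p - \<theta> s $ p)
        {s..s'}"
  shows "\<beta> T = (1\<^sub>m m + transpose_mat (incB n m src dst) * incD n m dst * Emat m g) *\<^sub>v \<beta> T0
    \<and> \<beta> T $ g = 0"
proof -
  have ends: "src g < n" "dst g < n" "src g \<noteq> dst g" using edges g by auto
  have \<beta>_g: "\<beta> \<tau> $ g = \<theta> \<tau> $ src g - \<theta> \<tau> $ dst g" for \<tau>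
    using \<beta>_def \<theta>_dim transpose_incB_mult_vec_nth[where src = src and dst = dst, OF _ g ends(1,2)]
    by simp
  have drift: "\<theta> s' $ p - \<theta> s $ p = w * (s' - s)"
    if "p < n" "p \<noteq> dst g" "T0 \<le> s" "s \<le> s'" "s' \<le> T" for p s s'
    using has_integral_unique[OF flow[OF that(1,3-5)]] has_integral_const_interval[OF that(4)] that(2)
    by simp
  have edge_change: "\<beta> s $ g - \<beta> s' $ g = \<theta> s' $ dst g - \<theta> s $ dst g - w * (s' - s)"
    if ss: "T0 \<le> s" "s \<le> s'" "s' \<le> T" for s s'
    using drift[OF ends(1) ends(3) ss] by (simp add: \<beta>_g)
  interpret sign_feedback k2 T0 T "\<lambda>\<tau>. \<beta> \<tau> $ g"
  proof
    fix s s' assume ss: "T0 \<le> s" "s \<le> s'" "s' \<le> T"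
    have "((\<lambda>\<tau>. (w + k2 * sgn (\<beta> \<tau> $ g)) - w)
        has_integral (\<theta> s' $ dst g - \<theta> s $ dst g) - w * (s' - s)) {s..s'}"
      using flow[OF ends(2) ss] by (intro has_integral_diff has_integral_const_interval ss(2)) simp
    then show "((\<lambda>\<tau>. k2 * sgn (\<beta> \<tau> $ g)) has_integral \<beta> s $ g - \<beta> s' $ g) {s..s'}"
      by (simp add: edge_change[OF ss])
  qed (rule k2)
  have zero: "\<beta> T $ g = 0" by (rule reaches_zero[OF T gap])
  have shift: "\<theta> T $ p = \<theta> T0 $ p + w * (T - T0) + (if p = dst g then \<beta> T0 $ g else 0)"
    if "p < n" for p
    using drift[OF that _ order_refl less_imp_le[OF T] order_refl]
      edge_change[OF order_refl less_imp_le[OF T] order_refl] zero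
    by (cases "p = dst g") auto
  have "\<beta> T = (1\<^sub>m m + transpose_mat (incB n m src dst) * incD n m dst * Emat m g) *\<^sub>v \<beta> T0"
    using transpose_incB_node_shift[of m src n dst g "\<theta> T0" "\<theta> T"] edges g \<theta>_dim shift \<beta>_def
    by simp
  with zero show ?thesis by simp
qed

lemma step_time_mono:
  fixes t :: "nat \<Rightarrow> real"
  assumes "\<forall>j\<in>{1..<n}. t j < t (Suc j)" "1 \<le> a" "a \<le> b" "b \<le> n"
  shows "t a \<le> t b"
  using lift_Suc_mono_le_ivl[of "{1..<n}" t a b] assms by (fastforce simp: less_imp_le)

lemma step_intervals_disjoint:
  fixes t :: "nat \<Rightarrow> real"
  assumes t_inc: "\<forall>j\<in>{1..<n}. t j < t (Suc j)" and "a \<in> {1..<n}" "b \<in> {1..<n}"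
    and "t a \<le> \<tau>" "\<tau> < t (Suc a)" "t b \<le> \<tau>" "\<tau> < t (Suc b)"
  shows "a = b"
proof (rule ccontr)
  assume "a \<noteq> b"
  then consider "Suc a \<le> b" | "Suc b \<le> a" by linarith
  then show False
    by cases (use step_time_mono[OF t_inc, of "Suc a" b] step_time_mono[OF t_inc, of "Suc b" a] assms
      in auto)
qed

locale ordered_spanning_tree =
  fixes n m :: nat and src dst :: "nat \<Rightarrow> nat" and r :: nat and Tr :: "nat set"
    and g :: "nat \<Rightarrow> nat"
  assumes edges_in: "\<forall>e<m. src e < n \<and> dst e < n"
    and tree: "outward_spanning_tree n m src dst r Tr"
    and g_bij: "bij_betw g {1..<n} Tr"
    and g_ord: "\<forall>a\<in>{1..<n}. \<forall>b\<in>{1..<n}. tree_prec m src dst Tr (g a) (g b) \<longrightarrow> a < b"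
begin

lemma tree_edges: "Tr \<subseteq> {0..<m}"
  and root_reaches: "v < n \<Longrightarrow> (r, v) \<in> (edge_rel m src dst Tr)\<^sup>*"
  and unique_edge_into: "v < n \<Longrightarrow> v \<noteq> r \<Longrightarrow> \<exists>!e. e \<in> Tr \<and> dst e = v"
  using tree unfolding outward_spanning_tree_def by blast+

lemma edge_in_tree: "a \<in> {1..<n} \<Longrightarrow> g a \<in> Tr"
  using g_bij by (auto simp: bij_betw_def)

lemma edge_less: "a \<in> {1..<n} \<Longrightarrow> g a < m"
  using edge_in_tree tree_edges by (meson atLeastLessThan_iff subsetD)

lemma dst_ne_root:
  assumes a: "a \<in> {1..<n}"
  shows "dst (g a) \<noteq> r"
proof
  assume root: "dst (g a) = r"
  have "(r, src (g a)) \<in> (edge_rel m src dst Tr)\<^sup>*"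
    using root_reaches edges_in edge_less[OF a] by blast
  moreover have "(src (g a), dst (g a)) \<in> edge_rel m src dst Tr"
    using edge_in_tree[OF a] edge_less[OF a] by (auto simp: edge_rel_def)
  ultimately have "tree_prec m src dst Tr (g a) (g a)"
    unfolding tree_prec_def root by (rule rtrancl_into_trancl1)
  with g_ord a show False by (meson less_irrefl)
qed

lemma jidx_dst:
  assumes a: "a \<in> {1..<n}"
  shows "jidx n dst g (dst (g a)) = a"
  unfolding jidx_def
proof (rule the_equality)
  fix b assume b: "b \<in> {1..<n} \<and> dst (g b) = dst (g a)"
  have "dst (g a) < n" using edges_in edge_less[OF a] by blast
  then have "g b = g a"
    using unique_edge_into[OF _ dst_ne_root[OF a]] b edge_in_tree a by blast
  moreover have "inj_on g {1..<n}" using g_bij by (simp add: bij_betw_def)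
  ultimately show "b = a" using a b by (simp add: inj_on_eq_iff)
qed (use a in auto)

lemma jidx_mem:
  assumes "p < n" "p \<noteq> r"
  shows "jidx n dst g p \<in> {1..<n} \<and> dst (g (jidx n dst g p)) = p"
proof -
  obtain e where "e \<in> Tr" "dst e = p" using unique_edge_into[OF assms] by blast
  then obtain a where "a \<in> {1..<n}" "dst (g a) = p" using g_bij by (auto simp: bij_betw_def)
  then show ?thesis using jidx_dst by auto
qed

lemma control_on_step_interval:
  fixes t :: "nat \<Rightarrow> real" and y \<beta> :: "real \<Rightarrow> real vec" and c :: "real \<Rightarrow> nat \<Rightarrow> real"
  assumes t_inc: "\<forall>j\<in>{1..<n}. t j < t (Suc j)"
    and c_def: "\<forall>\<tau>. \<forall>i<n. c \<tau> i =
        (if \<tau> < t 1 then k * (y \<tau> $ i)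
         else if i \<noteq> r \<and> t (jidx n dst g i) \<le> \<tau> \<and> \<tau> < t (Suc (jidx n dst g i))
           then k * (y (t 1) $ i) + k2 * sgn (\<beta> \<tau> $ g (jidx n dst g i))
         else k * (y (t 1) $ i))"
    and j: "j \<in> {1..<n}" and \<tau>: "t j \<le> \<tau>" "\<tau> < t (Suc j)" and p: "p < n"
  shows "c \<tau> p = k * (y (t 1) $ p) + (if p = dst (g j) then k2 * sgn (\<beta> \<tau> $ g j) else 0)"
proof -
  have "\<not> \<tau> < t 1" using step_time_mono[OF t_inc, of 1 j] j \<tau> by auto
  moreover have "p \<noteq> r \<and> t (jidx n dst g p) \<le> \<tau> \<and> \<tau> < t (Suc (jidx n dst g p))
      \<longleftrightarrow> p = dst (g j)"
  proof
    assume active: "p \<noteq> r \<and> t (jidx n dst g p) \<le> \<tau> \<and> \<tau> < t (Suc (jidx n dst g p))"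
    then have "jidx n dst g p = j"
      using jidx_mem[OF p] by (intro step_intervals_disjoint[OF t_inc _ j _ _ \<tau>]) auto
    then show "p = dst (g j)" using jidx_mem[OF p] active by auto
  qed (use dst_ne_root[OF j] jidx_dst[OF j] \<tau> in auto)
  ultimately show ?thesis using c_def[rule_format, OF p, of \<tau>] jidx_dst[OF j] by auto
qed

lemma potential_flow_on_step_interval:
  fixes t :: "nat \<Rightarrow> real" and \<theta> y \<beta> :: "real \<Rightarrow> real vec" and c :: "real \<Rightarrow> nat \<Rightarrow> real"
  assumes t_pos: "0 < t 1" and t_inc: "\<forall>j\<in>{1..<n}. t j < t (Suc j)"
    and c_def: "\<forall>\<tau>. \<forall>i<n. c \<tau> i =
        (if \<tau> < t 1 then k * (y \<tau> $ i)
         else if i \<noteq> r \<and> t (jidx n dst g i) \<le> \<tau> \<and> \<tau> < t (Suc (jidx n dst g i))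
           then k * (y (t 1) $ i) + k2 * sgn (\<beta> \<tau> $ g (jidx n dst g i))
         else k * (y (t 1) $ i))"
    and dyn: "\<forall>s s'. 0 \<le> s \<and> s \<le> s' \<longrightarrow>
        (\<forall>i<n. ((\<lambda>\<tau>. \<omega> $ i + c \<tau> i) has_integral (\<theta> s' $ i - \<theta> s $ i)) {s..s'})"
    and consensus: "\<And>p. p < n \<Longrightarrow> \<omega> $ p + k * (y (t 1) $ p) = w"
    and j: "j \<in> {1..<n}" and p: "p < n" and s: "t j \<le> s" "s \<le> s'" "s' \<le> t (Suc j)"
  shows "((\<lambda>\<tau>. w + (if p = dst (g j) then k2 * sgn (\<beta> \<tau> $ g j) else 0))
      has_integral \<theta> s' $ p - \<theta> s $ p) {s..s'}"
proof (rule has_integral_spike_finite[of "{t (Suc j)}"])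
  have "0 \<le> s" using step_time_mono[OF t_inc, of 1 j] j t_pos s by auto
  then show "((\<lambda>\<tau>. \<omega> $ p + c \<tau> p) has_integral \<theta> s' $ p - \<theta> s $ p) {s..s'}"
    using dyn p s(2) by blast
next
  fix \<tau> assume "\<tau> \<in> {s..s'} - {t (Suc j)}"
  then have "t j \<le> \<tau>" "\<tau> < t (Suc j)" using s by auto
  from control_on_step_interval[OF t_inc c_def j this p] consensus[OF p]
  show "w + (if p = dst (g j) then k2 * sgn (\<beta> \<tau> $ g j) else 0) = \<omega> $ p + c \<tau> p" by simp
qed auto

end

theorem lemma2:
  fixes n m :: nat and src dst :: "nat \<Rightarrow> nat" and r :: nat and Tr :: "nat set"
    and g :: "nat \<Rightarrow> nat" and t :: "nat \<Rightarrow> real" and k k2 :: real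
    and \<omega> z :: "real vec" and Qd :: "real mat"
    and \<theta> :: "real \<Rightarrow> real vec" and c :: "real \<Rightarrow> nat \<Rightarrow> real"
    and \<beta> y :: "real \<Rightarrow> real vec"
  assumes edges: "\<forall>e<m. src e < n \<and> dst e < n \<and> src e \<noteq> dst e"
    and sc: "strongly_connected n m src dst"
    and z_pos: "z \<in> carrier_vec n" "\<forall>i<n. z $ i > 0"
    and z_stat: "transpose_mat (rateQ n m src dst) *\<^sub>v z = 0\<^sub>v n"
    and z_sum: "(\<Sum>i<n. z $ i) = 1"
    and Qd: "is_Qdagger n (rateQ n m src dst) z Qd"
    and \<omega>: "\<omega> \<in> carrier_vec n"
    and tree: "outward_spanning_tree n m src dst r Tr"
    and g_bij: "bij_betw g {1..<n} Tr"
    and g_ord: "\<forall>a\<in>{1..<n}. \<forall>b\<in>{1..<n}. tree_prec m src dst Tr (g a) (g b) \<longrightarrow> a < b"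
    and k: "k > 0" and k2: "k2 > 0"
    and t_pos: "0 < t 1" and t_inc: "\<forall>j\<in>{1..<n}. t j < t (Suc j)"
    and \<theta>_dim: "\<forall>\<tau>. \<theta> \<tau> \<in> carrier_vec n"
    and \<beta>_def: "\<forall>\<tau>. \<beta> \<tau> = transpose_mat (incB n m src dst) *\<^sub>v \<theta> \<tau>"
    and y_def: "\<forall>\<tau>. y \<tau> = incD n m dst *\<^sub>v \<beta> \<tau>"
    and c_def: "\<forall>\<tau>. \<forall>i<n. c \<tau> i =
        (if \<tau> < t 1 then k * (y \<tau> $ i)
         else if i \<noteq> r \<and> t (jidx n dst g i) \<le> \<tau> \<and> \<tau> < t (Suc (jidx n dst g i))
           then k * (y (t 1) $ i) + k2 * sgn (\<beta> \<tau> $ g (jidx n dst g i))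
         else k * (y (t 1) $ i))"
    and dyn: "\<forall>s s'. 0 \<le> s \<and> s \<le> s' \<longrightarrow>
        (\<forall>i<n. ((\<lambda>\<tau>. \<omega> $ i + c \<tau> i) has_integral (\<theta> s' $ i - \<theta> s $ i)) {s..s'})"
    and gap: "\<forall>j\<in>{1..<n}. t (Suc j) - t j > \<bar>\<beta> (t j) $ g j\<bar> / k2"
    and init_\<beta>: "\<beta> (t 1) = (- (1 / k)) \<cdot>\<^sub>v ((transpose_mat (incB n m src dst) * Qd) *\<^sub>v \<omega>)"
    and init_y: "\<omega> + k \<cdot>\<^sub>v y (t 1) = Wmat n z *\<^sub>v \<omega>"
  shows "\<forall>j\<in>{1..<n}.
     \<beta> (t (Suc j)) = (1\<^sub>m m + transpose_mat (incB n m src dst) * incD n m dst * Emat m (g j)) *\<^sub>v \<beta> (t j)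
     \<and> \<beta> (t (Suc j)) $ g j = 0"
proof
  fix j assume j: "j \<in> {1..<n}"
  interpret ordered_spanning_tree n m src dst r Tr g
    using edges tree g_bij g_ord by unfold_locales auto
  have "dim_vec (y (t 1)) = n" using y_def incD_carrier[of n m dst] by simp
  then have "\<omega> $ p + k * (y (t 1) $ p) = (\<Sum>l<n. z $ l * \<omega> $ l)" if "p < n" for p
    by (rule Wmat_consensus[OF \<omega> carrier_vecI init_y that])
  note flow = potential_flow_on_step_interval[OF t_pos t_inc c_def dyn this j]
  have "\<bar>\<beta> (t j) $ g j\<bar> < k2 * (t (Suc j) - t j)"
    using gap j k2 by (simp add: pos_divide_less_eq mult.commute)
  then show "\<beta> (t (Suc j)) = (1\<^sub>m m + transpose_mat (incB n m src dst) * incD n m dst * Emat m (g j))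
      *\<^sub>v \<beta> (t j) \<and> \<beta> (t (Suc j)) $ g j = 0"
    using t_inc j
    by (intro sign_controlled_edge_step[OF edges \<theta>_dim \<beta>_def edge_less[OF j] k2 _ _ flow]) auto
qed

end
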